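(* Let $b$ be a prime, $m$ a positive integer and $N=b^m$. Let $0\le w_1\le w_2\le\dotsb$ be integers and, for each $j$, let $$\mathcal{Z}_{N,w_j}=\begin{cases}\{z\in\{1,\dotsc,b^{m-w_j}-1\}:\gcd(z,b^m)=1\} & \text{if } w_j<m,\\ \{1\} & \text{if } w_j\ge m.\end{cases}$$ Let $(\gamma_j)_{j\ge1}$ be a non-increasing sequence of product weights with $0<\gamma_j\le 1$, put $\beta_j=1+\gamma_j$ and $$S_N=\sum_{\substack{-\frac{N}{2}<h\le\frac{N}{2}\\ h\neq 0}}\frac{1}{|h|}.$$ For $\mathbf{z}=(z_1,\dotsc,z_d)$ define $$R_{N,\boldsymbol{\gamma}}^d(\mathbf{z})=\frac{1}{N}\sum_{k=0}^{N-1}\prod_{j=1}^d\left(\beta_j+\gamma_j\sum_{\substack{-\frac{N}{2}<h\le\frac{N}{2}\\ h\neq 0}}\frac{\mathrm{e}^{2\pi\mathrm{i} h k z_j/N}}{|h|}\right)-\prod_{j=1}^d\beta_j .$$ Let $\mathbf{z}=(b^{w_1}z_1,\dotsc,b^{w_s}z_s)$ be constructed by the reduced component-by-component algorithm: set $z_1=1$, and for $d=1,\dotsc,s-1$, with $z_1,\dotsc,z_d$ already fixed, choose $z_{d+1}\in\mathcal{Z}_{N,w_{d+1}}$ minimizing $R_{N,\boldsymbol{\gamma}}^{d+1}(b^{w_1}z_1,\dotsc,b^{w_d}z_d,b^{w_{d+1}}z)$ as a function of $z\in\mathcal{Z}_{N,w_{d+1}}$. Then for every $d\in\{1,\dotsc,s\}$,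 $$R_{N,\boldsymbol{\gamma}}^{d}\left(b^{w_1}z_1,\dotsc,b^{w_d}z_d\right)\le\frac{1}{N}\prod_{j=1}^d\left(\beta_j+\left(1+2b^{\min\{w_j,m\}}\right)\gamma_j S_N\right).$$
   Context: Lattice point sets $P_N(\mathbf{z})=\{\{k\mathbf{z}/N\}:k\}$ with $N=b^m$ points and generating vectors whose $j$-th component is restricted to $b^{w_j}\mathcal{Z}_{N,w_j}$ (reduced search space). The quantity $R_{N,\boldsymbol{\gamma}}^d$ controls the weighted star discrepancy via $D^*_{N,\boldsymbol{\gamma}}(\mathbf{z})\le \sum_{\mathfrak{u}\subseteq[s]}\gamma_{\mathfrak{u}}(1-(1-1/N)^{|\mathfrak{u}|})+\frac12 R_{N,\boldsymbol{\gamma}}^s(\mathbf{z})$. *)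

theory Defs
  imports "HOL-Analysis.Analysis"
begin

definition Zset :: "nat \<Rightarrow> nat \<Rightarrow> nat \<Rightarrow> nat set" where
  "Zset b m w = (if w < m then {z \<in> {1..b ^ (m - w) - 1}. coprime z (b ^ m)} else {1})"

definition Hset :: "nat \<Rightarrow> int set" where
  "Hset N = {h::int. - int N < 2 * h \<and> 2 * h \<le> int N \<and> h \<noteq> 0}"

definition S_N :: "nat \<Rightarrow> real" where
  "S_N N = (\<Sum>h\<in>Hset N. 1 / \<bar>real_of_int h\<bar>)"

text \<open>The expression is real-valued (terms h and -h are
  conjugate, and the h = N/2 term is real); we take the real part of the complex sum.\<close>
definition R_N :: "nat \<Rightarrow> (nat \<Rightarrow> real) \<Rightarrow> nat \<Rightarrow> (nat \<Rightarrow> nat) \<Rightarrow> real" where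
  "R_N N gamma d z =
     Re ((1 / of_nat N) * (\<Sum>k<N. \<Prod>j\<in>{1..d}.
        (complex_of_real (1 + gamma j) + complex_of_real (gamma j) *
          (\<Sum>h\<in>Hset N. exp (2 * complex_of_real pi * \<i> * of_int h * of_nat k * of_nat (z j) / of_nat N)
                          / complex_of_real \<bar>real_of_int h\<bar>))))
     - (\<Prod>j\<in>{1..d}. (1 + gamma j))"

end

theory Submission
  imports Defs
begin

text \<open>Expanding the product in R_N and averaging over k writes R^d + prod beta_j as the zeroth
  Fourier coefficient G_d(0) of the summand, where G_0 is the indicator of N | a and
  G_(d+1)(a) = beta G_d(a) + gamma sum_h G_d(a - h z_(d+1)) / |h|. The G_d are nonnegative,
  N-periodic and of total mass prod (beta_j + gamma_j S_N), and
  R^(d+1) = beta R^d + gamma sum_h G_d(- h z_(d+1)) / |h|.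
  The CBC minimiser is no worse than the average over Z_(N,w). For fixed a, the solutions
  z in Z_(N,w) of a + h b^w z = 0 (mod N) form one residue class modulo b^(m-w) / gcd(h, b^(m-w)),
  so there are at most gcd(h, b^(m-w)) of them; all these gcds coincide, and so the average of the
  second term is at most
  S_N prod (beta_j + gamma_j S_N) / |Z_(N,w)|, while |Z_(N,w)| >= b^(m-w) / 2.
  Induction on d gives the bound.\<close>

section \<open>Fourier expansion of \<open>R_N\<close>\<close>

definition unity_root :: "nat \<Rightarrow> int \<Rightarrow> complex" where
  "unity_root N t = exp (2 * complex_of_real pi * \<i> * of_int t / of_nat N)"

lemma unity_root_add: "unity_root N (s + t) = unity_root N s * unity_root N t"
  unfolding unity_root_def by (simp add: exp_add[symmetric] distrib_left add_divide_distrib)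

lemma unity_root_mult_nat: "unity_root N (int k * t) = unity_root N t ^ k"
proof -
  have "unity_root N (int k * t) = exp (of_nat k * (2 * complex_of_real pi * \<i> * of_int t / of_nat N))"
    unfolding unity_root_def by (simp add: field_simps)
  then show ?thesis
    unfolding unity_root_def by (metis exp_of_nat_mult times_divide_eq_right)
qed

lemma unity_root_eq_1_iff:
  assumes "N > 0"
  shows "unity_root N t = 1 \<longleftrightarrow> int N dvd t"
proof -
  have "unity_root N t = 1 \<longleftrightarrow> (\<exists>n::int. 2 * pi * of_int t / of_nat N = of_int (2 * n) * pi)"
    unfolding unity_root_def exp_eq_1 by simp
  also have "\<dots> \<longleftrightarrow> (\<exists>n::int. (of_int t :: real) = of_int (n * int N))"
    using assms by (auto simp: field_simps)
  also have "\<dots> \<longleftrightarrow> int N dvd t"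
    by (metis dvd_def mult.commute of_int_eq_iff)
  finally show ?thesis .
qed

lemma sum_unity_root:
  assumes "N > 0"
  shows "(\<Sum>k<N. unity_root N (int k * t)) = (if int N dvd t then of_nat N else 0)"
proof -
  have "unity_root N t ^ N = 1"
    using unity_root_mult_nat[of N N t] unity_root_eq_1_iff[OF assms, of "int N * t"] by simp
  then show ?thesis
    using unity_root_eq_1_iff[OF assms, of t] by (simp add: unity_root_mult_nat sum_gp_strict)
qed

definition R_N_summand :: "nat \<Rightarrow> (nat \<Rightarrow> real) \<Rightarrow> nat \<Rightarrow> (nat \<Rightarrow> nat) \<Rightarrow> nat \<Rightarrow> complex" where
  "R_N_summand N gamma d z k = (\<Prod>j\<in>{1..d}.
     complex_of_real (1 + gamma j) + complex_of_real (gamma j) *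
       (\<Sum>h\<in>Hset N. unity_root N (h * int k * int (z j)) / complex_of_real \<bar>real_of_int h\<bar>))"

lemma R_N_eq_summand:
  "R_N N gamma d z = Re (1 / of_nat N * (\<Sum>k<N. R_N_summand N gamma d z k)) - (\<Prod>j\<in>{1..d}. 1 + gamma j)"
  unfolding R_N_def R_N_summand_def unity_root_def by (simp add: mult.assoc)

text \<open>The discrete Fourier coefficients of \<open>R_N_summand\<close> (lemma \<open>R_N_coeff_eq\<close>): multiplying
  by one more factor of the product becomes a convolution with \<open>h \<mapsto> 1 / |h|\<close>.\<close>
primrec R_N_coeff :: "nat \<Rightarrow> (nat \<Rightarrow> real) \<Rightarrow> (nat \<Rightarrow> nat) \<Rightarrow> nat \<Rightarrow> int \<Rightarrow> real" where
  "R_N_coeff N gamma z 0 a = (if int N dvd a then 1 else 0)"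
| "R_N_coeff N gamma z (Suc d) a = (1 + gamma (Suc d)) * R_N_coeff N gamma z d a
     + gamma (Suc d) * (\<Sum>h\<in>Hset N. R_N_coeff N gamma z d (a - h * int (z (Suc d))) / \<bar>real_of_int h\<bar>)"

lemma R_N_coeff_eq:
  assumes "N > 0"
  shows "1 / of_nat N * (\<Sum>k<N. R_N_summand N gamma d z k * unity_root N (- (int k * a)))
           = complex_of_real (R_N_coeff N gamma z d a)"
proof (induction d arbitrary: a)
  case 0
  show ?case
    using sum_unity_root[OF assms, of "- a"] assms by (simp add: R_N_summand_def)
next
  case (Suc d)
  define y where "y = int (z (Suc d))"
  define \<beta> where "\<beta> = complex_of_real (1 + gamma (Suc d))"
  define \<gamma> where "\<gamma> = complex_of_real (gamma (Suc d))"
  let ?F = "R_N_summand N gamma d z"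
  let ?e = "\<lambda>k c. unity_root N (- (int k * c))"
  have shift: "unity_root N (h * int k * y) * ?e k a = ?e k (a - h * y)" for h k
    by (simp add: unity_root_add[symmetric] algebra_simps)
  have "R_N_summand N gamma (Suc d) z k * ?e k a
          = \<beta> * (?F k * ?e k a) + \<gamma> * (\<Sum>h\<in>Hset N. ?F k * ?e k (a - h * y) / complex_of_real \<bar>real_of_int h\<bar>)"
    for k
  proof -
    have "(\<Sum>h\<in>Hset N. unity_root N (h * int k * y) / complex_of_real \<bar>real_of_int h\<bar>) * (?F k * ?e k a)
            = (\<Sum>h\<in>Hset N. ?F k * ?e k (a - h * y) / complex_of_real \<bar>real_of_int h\<bar>)"
      unfolding sum_distrib_right
      by (rule sum.cong[OF refl]) (simp only: shift[symmetric], simp add: divide_inverse ac_simps)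
    then show ?thesis
      unfolding R_N_summand_def \<beta>_def \<gamma>_def y_def by (simp add: algebra_simps)
  qed
  then have "1 / of_nat N * (\<Sum>k<N. R_N_summand N gamma (Suc d) z k * ?e k a)
      = \<beta> * (1 / of_nat N * (\<Sum>k<N. ?F k * ?e k a))
        + \<gamma> * (\<Sum>h\<in>Hset N. (1 / of_nat N * (\<Sum>k<N. ?F k * ?e k (a - h * y))) / complex_of_real \<bar>real_of_int h\<bar>)"
    by (simp add: sum.distrib sum_distrib_left sum_divide_distrib[symmetric] sum.swap[of _ "Hset N"]
        distrib_left)
  also have "\<dots> = \<beta> * complex_of_real (R_N_coeff N gamma z d a)
      + \<gamma> * (\<Sum>h\<in>Hset N. complex_of_real (R_N_coeff N gamma z d (a - h * y)) / complex_of_real \<bar>real_of_int h\<bar>)"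
    by (simp only: Suc.IH)
  finally show ?case
    by (simp add: \<beta>_def \<gamma>_def y_def)
qed

lemma R_N_eq_coeff:
  assumes "N > 0"
  shows "R_N N gamma d z = R_N_coeff N gamma z d 0 - (\<Prod>j\<in>{1..d}. 1 + gamma j)"
  using R_N_coeff_eq[OF assms, of gamma d z 0] by (simp add: R_N_eq_summand unity_root_def)

lemma finite_Hset: "finite (Hset N)"
  by (rule finite_subset[of _ "{- int N..int N}"]) (auto simp: Hset_def)

lemma S_N_nonneg: "S_N N \<ge> 0"
  unfolding S_N_def by (rule sum_nonneg) simp

lemma R_N_coeff_cong: "(\<And>j. j \<in> {1..d} \<Longrightarrow> z j = z' j) \<Longrightarrow> R_N_coeff N gamma z d a = R_N_coeff N gamma z' d a"
  by (induction d arbitrary: a) auto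

lemma R_N_coeff_periodic: "R_N_coeff N gamma z d (a + int N * t) = R_N_coeff N gamma z d a"
proof (induction d arbitrary: a)
  case 0
  then show ?case by (simp add: dvd_add_left_iff)
next
  case (Suc d)
  have "R_N_coeff N gamma z d (a + int N * t - h * int (z (Suc d))) = R_N_coeff N gamma z d (a - h * int (z (Suc d)))" for h
    using Suc.IH[of "a - h * int (z (Suc d))"] by (simp add: algebra_simps)
  then show ?case using Suc.IH by simp
qed

lemma R_N_coeff_mod: "R_N_coeff N gamma z d (a mod int N) = R_N_coeff N gamma z d a"
  using R_N_coeff_periodic[of N gamma z d "a mod int N" "a div int N"] by (simp add: mult.commute)

lemma R_N_coeff_nonneg: "(\<And>j. j \<in> {1..d} \<Longrightarrow> gamma j \<ge> 0) \<Longrightarrow> R_N_coeff N gamma z d a \<ge> 0"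
proof (induction d arbitrary: a)
  case (Suc d)
  then have "gamma (Suc d) \<ge> 0" by simp
  with Suc show ?case by (simp add: sum_nonneg)
qed simp

lemma sum_shift_mod:
  fixes f :: "int \<Rightarrow> 'a::comm_monoid_add" and N :: int
  assumes "N > 0" and periodic: "\<And>a. f (a mod N) = f a"
  shows "(\<Sum>a\<in>{0..<N}. f (a - c)) = (\<Sum>a\<in>{0..<N}. f a)"
proof -
  have "bij_betw (\<lambda>a. (a - c) mod N) {0..<N} {0..<N}"
    by (rule bij_betwI[where g = "\<lambda>a. (a + c) mod N"]) (use assms(1) in \<open>auto simp: mod_simps\<close>)
  then have "(\<Sum>a\<in>{0..<N}. f ((a - c) mod N)) = (\<Sum>a\<in>{0..<N}. f a)"
    by (rule sum.reindex_bij_betw)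
  then show ?thesis by (simp add: periodic)
qed

lemma sum_R_N_coeff:
  assumes "N > 0"
  shows "(\<Sum>a\<in>{0..<int N}. R_N_coeff N gamma z d a) = (\<Prod>j\<in>{1..d}. 1 + gamma j + gamma j * S_N N)"
proof (induction d)
  case 0
  have "(\<Sum>a\<in>{0..<int N}. (if int N dvd a then 1 else 0::real)) = (\<Sum>a\<in>{0..<int N}. if a = 0 then 1 else 0)"
    by (rule sum.cong[OF refl]) (auto simp: zdvd_not_zless)
  then show ?case using assms by simp
next
  case (Suc d)
  let ?G = "R_N_coeff N gamma z d"
  have shift: "(\<Sum>a\<in>{0..<int N}. ?G (a - c)) = (\<Sum>a\<in>{0..<int N}. ?G a)" for c
    by (rule sum_shift_mod) (use assms R_N_coeff_mod in auto)
  have "(\<Sum>a\<in>{0..<int N}. R_N_coeff N gamma z (Suc d) a)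
     = (1 + gamma (Suc d)) * (\<Sum>a\<in>{0..<int N}. ?G a)
       + gamma (Suc d) * (\<Sum>h\<in>Hset N. (\<Sum>a\<in>{0..<int N}. ?G (a - h * int (z (Suc d)))) / \<bar>real_of_int h\<bar>)"
    by (simp add: sum.distrib sum_distrib_left sum_divide_distrib sum.swap[of _ "Hset N"])
  also have "\<dots> = (1 + gamma (Suc d) + gamma (Suc d) * S_N N) * (\<Sum>a\<in>{0..<int N}. ?G a)"
    unfolding shift S_N_def by (simp add: sum_distrib_right algebra_simps)
  finally show ?case using Suc.IH by (simp add: mult.commute)
qed

lemma R_N_coeff_eq_sum:
  assumes "N > 0"
  shows "R_N_coeff N gamma z d c = (\<Sum>a\<in>{0..<int N}. if int N dvd a - c then R_N_coeff N gamma z d a else 0)"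
proof -
  have "(\<Sum>a\<in>{0..<int N}. if int N dvd a - c then R_N_coeff N gamma z d a else 0)
      = (\<Sum>a\<in>{0..<int N}. if a = c mod int N then R_N_coeff N gamma z d a else 0)"
    by (rule sum.cong[OF refl]) (auto simp: mod_eq_dvd_iff[symmetric])
  also have "\<dots> = R_N_coeff N gamma z d c"
    using assms by (simp add: R_N_coeff_mod)
  finally show ?thesis by simp
qed

definition R_N_increment :: "nat \<Rightarrow> (nat \<Rightarrow> real) \<Rightarrow> (nat \<Rightarrow> nat) \<Rightarrow> nat \<Rightarrow> nat \<Rightarrow> real" where
  "R_N_increment N gamma z d c = (\<Sum>h\<in>Hset N. R_N_coeff N gamma z d (- (h * int c)) / \<bar>real_of_int h\<bar>)"

lemma R_N_0: "N > 0 \<Longrightarrow> R_N N gamma 0 z = 0"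
  by (simp add: R_N_eq_coeff)

lemma R_N_Suc_fun_upd:
  assumes "N > 0"
  shows "R_N N gamma (Suc d) (z(Suc d := c))
           = (1 + gamma (Suc d)) * R_N N gamma d z + gamma (Suc d) * R_N_increment N gamma z d c"
proof -
  have "R_N_coeff N gamma (z(Suc d := c)) d a = R_N_coeff N gamma z d a" for a
    by (rule R_N_coeff_cong) simp
  then show ?thesis
    using assms by (simp add: R_N_eq_coeff R_N_increment_def algebra_simps)
qed

lemma R_N_Suc:
  "N > 0 \<Longrightarrow> R_N N gamma (Suc d) z
     = (1 + gamma (Suc d)) * R_N N gamma d z + gamma (Suc d) * R_N_increment N gamma z d (z (Suc d))"
  using R_N_Suc_fun_upd[of N gamma d z "z (Suc d)"] by simp

section \<open>Solutions of linear congruences in the reduced search set\<close>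

lemma Hset_of_mult: assumes "(g::int) > 0" and "g * l \<in> Hset N" shows "l \<in> Hset N"
proof -
  have "l \<noteq> 0" using assms by (auto simp: Hset_def)
  then have "l \<le> g * l \<and> l > 0 \<or> g * l \<le> l \<and> l < 0"
    using assms(1) by (auto simp: mult_le_cancel_right1 mult_le_cancel_right2)
  then show ?thesis using assms(2) unfolding Hset_def mem_Collect_eq by arith
qed

lemma sum_Hset_multiples_le:
  assumes "(g::int) > 0"
  shows "(\<Sum>h\<in>Hset N. if g dvd h then real_of_int g / \<bar>real_of_int h\<bar> else 0) \<le> S_N N"
proof -
  define L where "L = {l. g * l \<in> Hset N}"
  have "{h\<in>Hset N. g dvd h} = (\<lambda>l. g * l) ` L"
    unfolding L_def by (auto simp: dvd_def)
  then have "(\<Sum>h\<in>Hset N. if g dvd h then real_of_int g / \<bar>real_of_int h\<bar> else 0)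
      = (\<Sum>h\<in>(\<lambda>l. g * l) ` L. real_of_int g / \<bar>real_of_int h\<bar>)"
    using finite_Hset by (simp add: sum.inter_filter[symmetric])
  also have "\<dots> = (\<Sum>l\<in>L. 1 / \<bar>real_of_int l\<bar>)"
    using assms by (subst sum.reindex) (auto simp: inj_on_def abs_mult)
  also have "\<dots> \<le> S_N N"
    unfolding S_N_def
    by (rule sum_mono2[OF finite_Hset]) (auto simp: L_def intro: Hset_of_mult[OF assms])
  finally show ?thesis .
qed

lemma card_le_of_congruent_below:
  fixes A :: "nat set" and q g :: int
  assumes "q > 0" and below: "\<And>z. z \<in> A \<Longrightarrow> int z < g * q"
    and congruent: "\<And>z z'. z \<in> A \<Longrightarrow> z' \<in> A \<Longrightarrow> q dvd int z - int z'"
  shows "card A \<le> nat g"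
proof -
  have "inj_on (\<lambda>z. int z div q) A"
  proof (rule inj_onI)
    fix z z' assume z: "z \<in> A" "z' \<in> A" and "int z div q = int z' div q"
    moreover from congruent[OF z] have "int z mod q = int z' mod q"
      by (simp add: mod_eq_dvd_iff)
    ultimately show "z = z'" by (metis div_mult_mod_eq of_nat_eq_iff)
  qed
  moreover have "(\<lambda>z. int z div q) ` A \<subseteq> {0..<g}"
  proof
    fix u assume "u \<in> (\<lambda>z. int z div q) ` A"
    then obtain z where "z \<in> A" and u: "u = int z div q" by blast
    have "int z div q * q \<le> int z"
      using pos_mod_sign[OF assms(1), of "int z"] div_mult_mod_eq[of "int z" q] by linarith
    with below[OF \<open>z \<in> A\<close>] have "int z div q < g"
      using assms(1) by (smt (verit) mult_right_mono)
    then show "u \<in> {0..<g}"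
      using assms(1) by (simp add: u pos_imp_zdiv_nonneg_iff)
  qed
  ultimately have "card A \<le> card {0..<g}"
    by (metis card_image card_mono finite_atLeastLessThan_int)
  then show ?thesis by simp
qed

lemma gcd_eq_of_dvd_add_mult:
  fixes a h p q z :: int
  assumes "coprime z (p * q)" and "p * q dvd a + h * p * z" and "p \<ge> 0"
  shows "p * gcd h q = gcd a (p * q)"
proof -
  obtain t where "a = t * (p * q) + - (h * p * z)"
    using assms(2) by (metis add_diff_cancel_right' diff_conv_add_uminus dvdE mult.commute)
  then have "gcd a (p * q) = gcd (p * q) (t * (p * q) + - (h * p * z))"
    by (simp only: gcd.commute)
  also have "\<dots> = gcd (p * q) (- (h * p * z))"
    by (rule gcd_add_mult)
  also have "\<dots> = gcd (p * q) (h * p)"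
    using assms(1) by (simp add: gcd_mult_right_right_cancel coprime_commute)
  also have "\<dots> = p * gcd q h"
    using assms(3) gcd_mult_distrib_int[of p q h] by (simp add: mult.commute)
  finally show ?thesis by (simp add: gcd.commute)
qed

lemma div_gcd_dvd_of_dvd_mult:
  fixes q h x :: int
  assumes "q dvd h * x" and "h \<noteq> 0"
  shows "q div gcd h q dvd x"
proof -
  define g where "g = gcd h q"
  have "g \<noteq> 0" using assms(2) by (simp add: g_def)
  have "g * (q div g) dvd g * (h div g * x)"
    using assms(1) by (simp add: g_def mult.assoc[symmetric])
  then have "q div g dvd h div g * x" using \<open>g \<noteq> 0\<close> by simp
  moreover have "coprime (q div g) (h div g)"
    using div_gcd_coprime[of h q] assms(2) by (simp add: g_def coprime_commute)
  ultimately show ?thesis by (simp add: g_def coprime_dvd_mult_right_iff)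
qed

lemma mem_Zset_iff:
  assumes "b > 0" and "w < m"
  shows "z \<in> Zset b m w \<longleftrightarrow> 1 \<le> z \<and> z < b ^ (m - w) \<and> coprime z (b ^ m)"
  using assms by (auto simp: Zset_def)

lemma finite_Zset: "finite (Zset b m w)"
  unfolding Zset_def by auto

lemma card_Zset_solutions_le:
  fixes a h :: int
  assumes "prime b" and "w < m" and "h \<noteq> 0"
  shows "card {z \<in> Zset b m w. int (b ^ m) dvd a + h * int (b ^ w * z)} \<le> nat (gcd h (int (b ^ (m - w))))"
    (is "card ?A \<le> nat ?g")
proof -
  define M where "M = int (b ^ (m - w))"
  have "b > 0" using assms(1) prime_gt_0_nat by blast
  then have "M > 0" by (simp add: M_def)
  have NM: "int (b ^ m) = int (b ^ w) * M"
    using assms(2) by (simp add: M_def power_add[symmetric])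
  have gM: "?g * (M div ?g) = M"
    by (simp add: M_def)
  with \<open>M > 0\<close> have "M div ?g > 0"
    by (metis gcd_pos_int M_def \<open>M > 0\<close> pos_imp_zdiv_pos_iff
        not_le gcd_le2_int)
  then show ?thesis
  proof (rule card_le_of_congruent_below)
    show "int z < ?g * (M div ?g)" if "z \<in> ?A" for z
      using that mem_Zset_iff[OF \<open>b > 0\<close> assms(2)] gM by (simp add: M_def)
    show "M div ?g dvd int z - int z'" if "z \<in> ?A" "z' \<in> ?A" for z z'
    proof -
      have "int (b ^ m) dvd (a + h * int (b ^ w * z)) - (a + h * int (b ^ w * z'))"
        using that by (intro dvd_diff) auto
      then have "int (b ^ w) * M dvd int (b ^ w) * (h * (int z - int z'))"
        unfolding NM by (simp add: algebra_simps)
      then have "M dvd h * (int z - int z')"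
        using \<open>b > 0\<close> by simp
      then show ?thesis
        using div_gcd_dvd_of_dvd_mult assms(3) by (simp add: M_def)
    qed
  qed
qed
lemma sum_Zset_Hset_solutions_le:
  fixes a :: int
  assumes "prime b" and "w < m"
  shows "(\<Sum>z\<in>Zset b m w. \<Sum>h\<in>Hset (b ^ m).
           if int (b ^ m) dvd a + h * int (b ^ w * z) then 1 / \<bar>real_of_int h\<bar> else 0) \<le> S_N (b ^ m)"
proof -
  define N where "N = b ^ m"
  define M where "M = int (b ^ (m - w))"
  define A where "A h = {z \<in> Zset b m w. int N dvd a + h * int (b ^ w * z)}" for h
  have "b > 0" using assms(1) prime_gt_0_nat by blast
  have "(\<Sum>z\<in>Zset b m w. \<Sum>h\<in>Hset N. if int N dvd a + h * int (b ^ w * z) then 1 / \<bar>real_of_int h\<bar> else 0)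
      = (\<Sum>h\<in>Hset N. real (card (A h)) / \<bar>real_of_int h\<bar>)"
    by (subst sum.swap) (simp add: A_def finite_Zset sum.inter_filter[symmetric])
  also have "\<dots> \<le> S_N N"
  proof (cases "\<forall>h\<in>Hset N. A h = {}")
    case True
    then show ?thesis using S_N_nonneg by simp
  next
    case False
    then obtain h0 z0 where "z0 \<in> A h0" by blast
    define g where "g = gcd h0 M"
    text \<open>The solution sets of all \<open>h\<close> share one gcd, namely \<open>gcd a N / b ^ w\<close>.\<close>
    have NM: "int N = int (b ^ w) * M"
      using assms(2) by (simp add: N_def M_def power_add[symmetric])
    have gcd_eq: "int (b ^ w) * gcd h M = gcd a (int N)" if "z \<in> A h" for h z
    proof -
      have "coprime (int z) (int N)"
        using that mem_Zset_iff[OF \<open>b > 0\<close> assms(2)] by (simp add: A_def N_def)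
      moreover have "int N dvd a + h * int (b ^ w) * int z"
        using that by (simp add: A_def mult.assoc)
      ultimately show ?thesis
        unfolding NM by (intro gcd_eq_of_dvd_add_mult) simp_all
    qed
    have "g > 0" using \<open>b > 0\<close> by (simp add: g_def M_def)
    have "(\<Sum>h\<in>Hset N. real (card (A h)) / \<bar>real_of_int h\<bar>)
        \<le> (\<Sum>h\<in>Hset N. if g dvd h then real_of_int g / \<bar>real_of_int h\<bar> else 0)"
    proof (rule sum_mono)
      fix h assume "h \<in> Hset N"
      then have "h \<noteq> 0" by (simp add: Hset_def)
      show "real (card (A h)) / \<bar>real_of_int h\<bar> \<le> (if g dvd h then real_of_int g / \<bar>real_of_int h\<bar> else 0)"
      proof (cases "A h = {}")
        case False
        then obtain z where "z \<in> A h" by blast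
        have "int (b ^ w) \<noteq> 0" using \<open>b > 0\<close> by simp
        with gcd_eq[OF \<open>z \<in> A h\<close>] gcd_eq[OF \<open>z0 \<in> A h0\<close>] have "gcd h M = g"
          by (metis g_def mult_left_cancel)
        have "card (A h) \<le> nat (gcd h M)"
          unfolding A_def N_def M_def by (rule card_Zset_solutions_le[OF assms \<open>h \<noteq> 0\<close>])
        with \<open>gcd h M = g\<close> \<open>g > 0\<close> have "real (card (A h)) \<le> real_of_int g"
          by linarith
        moreover have "g dvd h"
          using \<open>gcd h M = g\<close> by (metis gcd_dvd1)
        ultimately show ?thesis
          by (simp add: divide_right_mono)
      qed (use \<open>g > 0\<close> in simp)
    qed
    also have "\<dots> \<le> S_N N"
      by (rule sum_Hset_multiples_le[OF \<open>g > 0\<close>])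
    finally show ?thesis .
  qed
  finally show ?thesis unfolding N_def .
qed

lemma card_Zset_ge:
  assumes "prime b" and "w < m"
  shows "real (b ^ (m - w)) \<le> 2 * real (card (Zset b m w))"
proof -
  define M where "M = b ^ (m - w)"
  define D where "D = {1..M - 1}"
  define Z where "Z = {z \<in> D. \<not> b dvd z}"
  define Y where "Y = {z \<in> D. b dvd z}"
  have "b > 1" using assms(1) prime_gt_1_nat by blast
  have "b dvd M" using assms(2) by (simp add: M_def)
  have "b ^ 1 \<le> M"
    unfolding M_def by (rule power_increasing) (use assms(2) \<open>b > 1\<close> in auto)
  then have "M \<ge> 2" using \<open>b > 1\<close> by simp
  have "m > 0" using assms(2) by simp
  have "coprime z (b ^ m) \<longleftrightarrow> \<not> b dvd z" for z
    using assms(1) \<open>m > 0\<close>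
    by (meson coprime_common_divisor dvd_power not_prime_unit prime_imp_power_coprime_nat)
  then have "Zset b m w = Z"
    using assms(2) by (auto simp: Zset_def Z_def D_def M_def)
  text \<open>\<open>z \<mapsto> z + 1\<close> maps the multiples of \<open>b\<close> in \<open>D\<close> into the non-multiples other than \<open>1\<close>.\<close>
  have "card Y \<le> card (Z - {1})"
  proof (rule card_inj_on_le)
    show "Suc ` Y \<subseteq> Z - {1}"
    proof
      fix u assume "u \<in> Suc ` Y"
      then obtain z where z: "z \<in> D" "b dvd z" and u: "u = Suc z" by (auto simp: Y_def)
      have "\<not> b dvd Suc z"
      proof
        assume "b dvd Suc z"
        then have "b dvd Suc z - z" using z(2) by (rule dvd_diff_nat)
        then show False using \<open>b > 1\<close> by simp
      qed
      moreover have "Suc z \<noteq> M"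
        using \<open>b dvd M\<close> \<open>\<not> b dvd Suc z\<close> by blast
      ultimately show "u \<in> Z - {1}"
        using z u by (auto simp: Z_def D_def)
    qed
  qed (auto simp: Z_def D_def)
  moreover have "1 \<in> Z" "finite Z"
    using \<open>M \<ge> 2\<close> \<open>b > 1\<close> by (auto simp: Z_def D_def)
  moreover have "card Z + card Y = M - 1"
  proof -
    have "D = Z \<union> Y" "Z \<inter> Y = {}" "finite Z" "finite Y" by (auto simp: Z_def Y_def D_def)
    then have "card D = card Z + card Y" by (simp add: card_Un_disjoint)
    then show ?thesis by (simp add: D_def)
  qed
  ultimately have "M \<le> 2 * card Z"
    using \<open>M \<ge> 2\<close> by (simp add: card_gt_0_iff)
  then have "real M \<le> 2 * real (card Z)"
    by linarith
  then show ?thesis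
    unfolding \<open>Zset b m w = Z\<close> M_def .
qed

section \<open>The reduced CBC construction\<close>

lemma R_N_increment_0_le:
  assumes "b > 0"
  shows "R_N_increment (b ^ m) gamma z 0 (b ^ x) \<le> real b ^ min x m * S_N (b ^ m) / real (b ^ m)"
proof -
  define N where "N = b ^ m"
  define M where "M = b ^ (m - min x m)"
  have NM: "N = b ^ min x m * M"
    by (simp add: N_def M_def power_add[symmetric])
  have "M > 0" using assms by (simp add: M_def)
  have dvd: "int M dvd h" if "int N dvd h * int b ^ x" for h
  proof (cases "m \<le> x")
    case True
    then show ?thesis by (simp add: M_def)
  next
    case False
    with that have "int (b ^ x) * int M dvd int (b ^ x) * h"
      by (simp add: NM mult.commute)
    then show ?thesis using assms by simp
  qed
  have "real M * R_N_increment N gamma z 0 (b ^ x)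
      \<le> (\<Sum>h\<in>Hset N. if int M dvd h then real_of_int (int M) / \<bar>real_of_int h\<bar> else 0)"
    unfolding R_N_increment_def sum_distrib_left by (rule sum_mono) (auto dest: dvd)
  also have "\<dots> \<le> S_N N"
    by (rule sum_Hset_multiples_le) (use \<open>M > 0\<close> in simp)
  finally have "real M * R_N_increment N gamma z 0 (b ^ x) \<le> S_N N" .
  then show ?thesis
    using \<open>M > 0\<close> assms by (simp add: N_def[symmetric] NM field_simps)
qed

lemma R_N_increment_le_of_modulus_dvd:
  assumes "b > 0" and "m \<le> x" and gamma: "\<And>j. j \<in> {1..d} \<Longrightarrow> 0 \<le> gamma j"
  shows "R_N_increment (b ^ m) gamma y d (b ^ x * c)
           \<le> S_N (b ^ m) * (\<Prod>j\<in>{1..d}. 1 + gamma j + gamma j * S_N (b ^ m))"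
proof -
  define N where "N = b ^ m"
  have "N > 0" using assms(1) by (simp add: N_def)
  have "int N dvd h * int (b ^ x * c)" for h
    using assms(2) by (simp add: N_def le_imp_power_dvd)
  then have "R_N_coeff N gamma y d (- (h * int (b ^ x * c))) = R_N_coeff N gamma y d 0" for h
    by (metis R_N_coeff_mod dvd_imp_mod_0 dvd_minus_iff)
  then have "R_N_increment N gamma y d (b ^ x * c) = S_N N * R_N_coeff N gamma y d 0"
    by (simp add: R_N_increment_def S_N_def sum_distrib_right)
  also have "\<dots> \<le> S_N N * (\<Sum>a\<in>{0..<int N}. R_N_coeff N gamma y d a)"
    using \<open>N > 0\<close> by (intro mult_left_mono member_le_sum S_N_nonneg R_N_coeff_nonneg gamma) auto
  finally show ?thesis
    using sum_R_N_coeff[OF \<open>N > 0\<close>] by (simp add: N_def)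
qed

lemma sum_R_N_increment_Zset_le:
  assumes "prime b" and "x < m" and gamma: "\<And>j. j \<in> {1..d} \<Longrightarrow> 0 \<le> gamma j"
  shows "(\<Sum>z\<in>Zset b m x. R_N_increment (b ^ m) gamma y d (b ^ x * z))
           \<le> S_N (b ^ m) * (\<Prod>j\<in>{1..d}. 1 + gamma j + gamma j * S_N (b ^ m))"
proof -
  define N where "N = b ^ m"
  have "N > 0" using assms(1) prime_gt_0_nat by (simp add: N_def)
  let ?G = "R_N_coeff N gamma y d"
  let ?sol = "\<lambda>a z h. if int N dvd a + h * int (b ^ x * z) then 1 / \<bar>real_of_int h\<bar> else 0"
  have "R_N_increment N gamma y d (b ^ x * z) = (\<Sum>h\<in>Hset N. \<Sum>a\<in>{0..<int N}. ?G a * ?sol a z h)" for z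
    unfolding R_N_increment_def
    by (subst R_N_coeff_eq_sum[OF \<open>N > 0\<close>]) (auto simp: sum_divide_distrib intro!: sum.cong)
  then have "(\<Sum>z\<in>Zset b m x. R_N_increment N gamma y d (b ^ x * z))
      = (\<Sum>z\<in>Zset b m x. \<Sum>a\<in>{0..<int N}. \<Sum>h\<in>Hset N. ?G a * ?sol a z h)"
    by (simp add: sum.swap[of _ "Hset N"])
  also have "\<dots> = (\<Sum>a\<in>{0..<int N}. ?G a * (\<Sum>z\<in>Zset b m x. \<Sum>h\<in>Hset N. ?sol a z h))"
    by (subst sum.swap) (simp add: sum_distrib_left)
  also have "\<dots> \<le> (\<Sum>a\<in>{0..<int N}. ?G a * S_N N)"
    using sum_Zset_Hset_solutions_le[OF assms(1,2)] R_N_coeff_nonneg[OF gamma]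
    by (intro sum_mono mult_left_mono) (auto simp: N_def)
  also have "\<dots> = S_N N * (\<Sum>a\<in>{0..<int N}. ?G a)"
    by (simp add: sum_distrib_left mult.commute)
  also have "\<dots> = S_N N * (\<Prod>j\<in>{1..d}. 1 + gamma j + gamma j * S_N N)"
    by (simp only: sum_R_N_coeff[OF \<open>N > 0\<close>])
  finally show ?thesis unfolding N_def .
qed

lemma ex_R_N_increment_Zset_le:
  assumes "prime b" and "x < m" and gamma: "\<And>j. j \<in> {1..d} \<Longrightarrow> 0 \<le> gamma j"
  shows "\<exists>z\<in>Zset b m x. R_N_increment (b ^ m) gamma y d (b ^ x * z)
           \<le> 2 * real b ^ x * S_N (b ^ m) * (\<Prod>j\<in>{1..d}. 1 + gamma j + gamma j * S_N (b ^ m)) / real (b ^ m)"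
    (is "\<exists>z\<in>?Z. ?inc z \<le> ?t")
proof (rule ccontr)
  assume "\<not> ?thesis"
  then have less: "?t < ?inc z" if "z \<in> ?Z" for z
    using that by (simp add: not_le)
  define P where "P = (\<Prod>j\<in>{1..d}. 1 + gamma j + gamma j * S_N (b ^ m))"
  have "b > 0" using assms(1) prime_gt_0_nat by blast
  have "P \<ge> 0"
    unfolding P_def using gamma S_N_nonneg by (intro prod_nonneg) simp
  have N: "real b ^ m = real b ^ x * real b ^ (m - x)"
    using assms(2) by (simp add: power_add[symmetric])
  have card: "real (b ^ (m - x)) \<le> 2 * real (card ?Z)"
    by (rule card_Zset_ge[OF assms(1,2)])
  moreover have "real (b ^ (m - x)) > 0" using \<open>b > 0\<close> by simp
  ultimately have "real (card ?Z) > 0" by linarith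
  then have "?Z \<noteq> {}" by (metis card.empty of_nat_0 less_irrefl)
  have "S_N (b ^ m) * P = real (b ^ (m - x)) * ?t / 2"
    using \<open>b > 0\<close> by (simp add: N P_def field_simps)
  also have "\<dots> = real (b ^ (m - x)) / 2 * ?t"
    by simp
  also have "\<dots> \<le> real (card ?Z) * ?t"
    using card \<open>P \<ge> 0\<close> S_N_nonneg[of "b ^ m"] unfolding P_def[symmetric]
    by (intro mult_right_mono) auto
  also have "\<dots> < (\<Sum>z\<in>?Z. ?inc z)"
    using sum_strict_mono[OF finite_Zset \<open>?Z \<noteq> {}\<close> less] by simp
  also have "\<dots> \<le> S_N (b ^ m) * P"
    unfolding P_def by (rule sum_R_N_increment_Zset_le[OF assms])
  finally show False by simp
qed

lemma R_N_Suc_le_cbc: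
  assumes "prime b" and gamma: "\<And>j. j \<in> {1..Suc d} \<Longrightarrow> 0 \<le> gamma j"
    and y: "y (Suc d) = b ^ x * z"
    and choice: "d = 0 \<and> z = 1 \<or> z \<in> Zset b m x \<and>
      (\<forall>z'\<in>Zset b m x. R_N (b ^ m) gamma (Suc d) y \<le> R_N (b ^ m) gamma (Suc d) (y(Suc d := b ^ x * z')))"
  shows "R_N (b ^ m) gamma (Suc d) y \<le> (1 + gamma (Suc d)) * R_N (b ^ m) gamma d y + gamma (Suc d) *
           (2 * real b ^ min x m * S_N (b ^ m) * (\<Prod>j\<in>{1..d}. 1 + gamma j + gamma j * S_N (b ^ m)) / real (b ^ m))"
proof -
  define N where "N = b ^ m"
  define P where "P = (\<Prod>j\<in>{1..d}. 1 + gamma j + gamma j * S_N N)"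
  have "b > 0" using assms(1) prime_gt_0_nat by blast
  then have "N > 0" by (simp add: N_def)
  have gamma_d: "\<And>j. j \<in> {1..d} \<Longrightarrow> 0 \<le> gamma j"
    using gamma by simp
  have "P \<ge> 0"
    unfolding P_def using gamma_d S_N_nonneg by (intro prod_nonneg) simp
  obtain c where R: "R_N N gamma (Suc d) y \<le> (1 + gamma (Suc d)) * R_N N gamma d y + gamma (Suc d) * R_N_increment N gamma y d c"
    and inc: "R_N_increment N gamma y d c \<le> 2 * real b ^ min x m * S_N N * P / real N"
  proof (cases "d = 0 \<and> z = 1")
    case True
    have "R_N_increment N gamma y 0 (b ^ x) \<le> real b ^ min x m * S_N N / real N"
      unfolding N_def by (rule R_N_increment_0_le[OF \<open>b > 0\<close>])
    also have "\<dots> \<le> 2 * real b ^ min x m * S_N N * P / real N"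
      using True S_N_nonneg by (simp add: P_def divide_right_mono)
    finally show ?thesis
      using that[of "b ^ x"] True y R_N_Suc[OF \<open>N > 0\<close>] by simp
  next
    case False
    with choice have "z \<in> Zset b m x"
      and min: "\<And>z'. z' \<in> Zset b m x \<Longrightarrow> R_N N gamma (Suc d) y \<le> R_N N gamma (Suc d) (y(Suc d := b ^ x * z'))"
      by (auto simp: N_def)
    show ?thesis
    proof (cases "m \<le> x")
      case True
      have "R_N_increment N gamma y d (b ^ x * z) \<le> S_N N * P"
        unfolding N_def P_def by (rule R_N_increment_le_of_modulus_dvd[OF \<open>b > 0\<close> True gamma_d])
      also have "\<dots> \<le> 2 * real N * S_N N * P / real N"
        using \<open>P \<ge> 0\<close> S_N_nonneg[of N] \<open>N > 0\<close> by simp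
      also have "\<dots> = 2 * real b ^ min x m * S_N N * P / real N"
        using True by (simp add: N_def)
      finally show ?thesis
        using that[of "b ^ x * z"] y R_N_Suc[OF \<open>N > 0\<close>] by simp
    next
      case False
      then have "x < m" by simp
      then obtain z' where "z' \<in> Zset b m x"
        and inc: "R_N_increment N gamma y d (b ^ x * z') \<le> 2 * real b ^ x * S_N N * P / real N"
        using ex_R_N_increment_Zset_le[where gamma = gamma and d = d and y = y, OF assms(1) \<open>x < m\<close> gamma_d]
        unfolding N_def P_def by blast
      show ?thesis
      proof (rule that[of "b ^ x * z'"])
        show "R_N N gamma (Suc d) y \<le> (1 + gamma (Suc d)) * R_N N gamma d y + gamma (Suc d) * R_N_increment N gamma y d (b ^ x * z')"
          using min[OF \<open>z' \<in> Zset b m x\<close>] R_N_Suc_fun_upd[OF \<open>N > 0\<close>] by simp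
        show "R_N_increment N gamma y d (b ^ x * z') \<le> 2 * real b ^ min x m * S_N N * P / real N"
          using inc False by simp
      qed
    qed
  qed
  from inc gamma[of "Suc d"] have "gamma (Suc d) * R_N_increment N gamma y d c
      \<le> gamma (Suc d) * (2 * real b ^ min x m * S_N N * P / real N)"
    by (intro mult_left_mono) auto
  with R show ?thesis
    by (simp add: N_def P_def)
qed

lemma prod_bound_Suc:
  fixes gamma c :: "nat \<Rightarrow> real" and S N r r' :: real
  assumes "N > 0" and "S \<ge> 0"
    and nonneg: "\<And>j. j \<in> {1..Suc d} \<Longrightarrow> 0 \<le> gamma j \<and> 0 \<le> c j"
    and r: "r \<le> 1 / N * (\<Prod>j\<in>{1..d}. 1 + gamma j + (1 + 2 * c j) * gamma j * S)"
    and r': "r' \<le> (1 + gamma (Suc d)) * r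
               + gamma (Suc d) * (2 * c (Suc d) * S * (\<Prod>j\<in>{1..d}. 1 + gamma j + gamma j * S) / N)"
  shows "r' \<le> 1 / N * (\<Prod>j\<in>{1..Suc d}. 1 + gamma j + (1 + 2 * c j) * gamma j * S)"
proof -
  define B where "B = (\<Prod>j\<in>{1..d}. 1 + gamma j + (1 + 2 * c j) * gamma j * S)"
  define g where "g = gamma (Suc d)"
  have g: "0 \<le> g" "0 \<le> c (Suc d)" using nonneg[of "Suc d"] by (auto simp: g_def)
  have "B \<ge> 0"
    unfolding B_def using nonneg \<open>S \<ge> 0\<close> by (intro prod_nonneg) auto
  have "(\<Prod>j\<in>{1..d}. 1 + gamma j + gamma j * S) \<le> B"
    unfolding B_def
  proof (intro prod_mono conjI)
    fix j assume "j \<in> {1..d}"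
    with nonneg have "0 \<le> gamma j" "0 \<le> c j" by auto
    with \<open>S \<ge> 0\<close> show "0 \<le> 1 + gamma j + gamma j * S"
      and "1 + gamma j + gamma j * S \<le> 1 + gamma j + (1 + 2 * c j) * gamma j * S"
      by (auto simp: algebra_simps intro!: mult_right_mono)
  qed
  then have "2 * c (Suc d) * S * (\<Prod>j\<in>{1..d}. 1 + gamma j + gamma j * S) / N \<le> 2 * c (Suc d) * S * B / N"
    using g \<open>S \<ge> 0\<close> \<open>N > 0\<close> by (intro divide_right_mono mult_left_mono) auto
  then have "g * (2 * c (Suc d) * S * (\<Prod>j\<in>{1..d}. 1 + gamma j + gamma j * S) / N) \<le> g * (2 * c (Suc d) * S * B / N)"
    using g by (intro mult_left_mono)
  moreover have "(1 + g) * r \<le> (1 + g) * (B / N)"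
    using r g by (intro mult_left_mono) (auto simp: B_def)
  ultimately have "r' \<le> (1 + g) * (B / N) + g * (2 * c (Suc d) * S * B / N)"
    using r' unfolding g_def by linarith
  also have "\<dots> = B * (1 + g + 2 * c (Suc d) * g * S) / N"
    by (simp add: add_divide_distrib algebra_simps)
  also have "\<dots> \<le> B * (1 + g + (1 + 2 * c (Suc d)) * g * S) / N"
    using g \<open>B \<ge> 0\<close> \<open>S \<ge> 0\<close> \<open>N > 0\<close> by (intro divide_right_mono mult_left_mono) (auto simp: algebra_simps)
  finally show ?thesis
    by (simp add: B_def g_def)
qed

theorem theorem2:
  fixes b m s :: nat and w :: "nat \<Rightarrow> nat" and gamma :: "nat \<Rightarrow> real" and zz :: "nat \<Rightarrow> nat"
  assumes "prime b" and "m > 0"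
    and w_mono: "\<And>j. j \<ge> 1 \<Longrightarrow> w j \<le> w (Suc j)"
    and gamma_pos: "\<And>j. j \<ge> 1 \<Longrightarrow> 0 < gamma j \<and> gamma j \<le> 1"
    and gamma_mono: "\<And>j. j \<ge> 1 \<Longrightarrow> gamma (Suc j) \<le> gamma j"
    and z1: "zz 1 = 1"
    and cbc_mem: "\<And>d. d \<in> {1..s-1} \<Longrightarrow> zz (d + 1) \<in> Zset b m (w (d + 1))"
    and cbc_min: "\<And>d z. d \<in> {1..s-1} \<Longrightarrow> z \<in> Zset b m (w (d + 1)) \<Longrightarrow>
        R_N (b ^ m) gamma (d + 1) (\<lambda>j. b ^ w j * zz j)
          \<le> R_N (b ^ m) gamma (d + 1) ((\<lambda>j. b ^ w j * zz j)(d + 1 := b ^ w (d + 1) * z))"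
  shows "\<forall>d\<in>{1..s}. R_N (b ^ m) gamma d (\<lambda>j. b ^ w j * zz j)
           \<le> 1 / real (b ^ m) * (\<Prod>j\<in>{1..d}. (1 + gamma j
                 + (1 + 2 * real b ^ min (w j) m) * gamma j * S_N (b ^ m)))"
proof -
  define y where "y = (\<lambda>j. b ^ w j * zz j)"
  have "b > 0" using assms(1) prime_gt_0_nat by blast
  have gamma: "0 \<le> gamma j" if "j \<ge> 1" for j using gamma_pos[OF that] by simp
  have "R_N (b ^ m) gamma d y \<le> 1 / real (b ^ m) *
          (\<Prod>j\<in>{1..d}. 1 + gamma j + (1 + 2 * real b ^ min (w j) m) * gamma j * S_N (b ^ m))"
    if "d \<le> s" for d
    using that
  proof (induction d)
    case 0
    then show ?case using \<open>b > 0\<close> by (simp add: R_N_0)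
  next
    case (Suc d)
    have "d = 0 \<and> zz (Suc d) = 1 \<or> zz (Suc d) \<in> Zset b m (w (Suc d)) \<and>
      (\<forall>z'\<in>Zset b m (w (Suc d)). R_N (b ^ m) gamma (Suc d) y \<le> R_N (b ^ m) gamma (Suc d) (y(Suc d := b ^ w (Suc d) * z')))"
      using z1 cbc_mem[of d] cbc_min[of d] Suc.prems by (cases "d = 0") (auto simp: y_def)
    then have "R_N (b ^ m) gamma (Suc d) y \<le> (1 + gamma (Suc d)) * R_N (b ^ m) gamma d y + gamma (Suc d) *
        (2 * real b ^ min (w (Suc d)) m * S_N (b ^ m) * (\<Prod>j\<in>{1..d}. 1 + gamma j + gamma j * S_N (b ^ m)) / real (b ^ m))"
      by (intro R_N_Suc_le_cbc[OF assms(1)]) (auto simp: y_def gamma)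
    with Suc show ?case
      using \<open>b > 0\<close> S_N_nonneg by (intro prod_bound_Suc) (auto simp: gamma)
  qed
  then show ?thesis by (simp add: y_def)
qed

end
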